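(* Let $S$ be a nonempty set and $G$ a group of permutations of $S$, and suppose that $G$ and $SV_G$ are both finitely generated, equipped with word metrics from finite generating sets. Then there exists a coarse Lipschitz map $\rho\colon SV_G\to G$ such that $\rho\circ\iota_\varnothing$ is the identity of $G$. In particular, $G$ is a quasi-retract of $SV_G$, and $\iota_\varnothing$ is a quasi-isometric embedding of $G$ into $SV_G$.
   Context: Let $\mathfrak C=\{0,1\}^{\omega}$ be the Cantor set, $S$ a nonempty set, and $G$ a subgroup of the symmetric group of $S$. Let $\mathfrak C^S$ be the space of all functions $S\to\mathfrak C$ with the product topology. For a function $\psi\colon S\to\{0,1\}^*$ with $\psi(s)=\varnothing$ for all but finitely many $s$, the dyadic brick $B(\psi)$ is the set of $\kappa\in\mathfrak C^S$ such that $\psi(s)$ is a prefix of $\kappa(s)$ for all $s\in S$; the canonical homeomorphism $\Phi_\psi\colon\mathfrak C^S\to B(\psi)$ is $\Phi_\psi(\kappa)(s)=\psi(s)\cdot\kappa(s)$. For $\gamma\in G$ let $\tau_\gamma\colon\mathfrak C^S\to\mathfrak C^S$ be $\tau_\gamma(\kappa)(s)=\kappa(\gamma^{-1}s)$. The twist homeomorphism $B(\varphi)\to B(\psi)$ associated to $\gamma$ is $\Phi_\psi\circ\tau_\gamma\circ\Phi_\varphi^{-1}$. The twisted Brin–Thompson group $SV_G$ is the group of all homeomorphisms $h$ of $\mathfrak C^S$ for which there exist two partitions $B(\varphi_1),\dots,B(\varphi_n)$ and $B(\psi_1),\dots,B(\psi_n)$ of $\mathfrak C^S$ into dyadic bricks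 and $\gamma_1,\dots,\gamma_n\in G$ such that $h|_{B(\varphi_i)}$ is the twist homeomorphism $B(\varphi_i)\to B(\psi_i)$ associated to $\gamma_i$. The embedding $\iota_\varnothing\colon G\to SV_G$ is $\iota_\varnothing(\gamma)=\tau_\gamma$. A map $f\colon X\to Y$ of metric spaces is coarse Lipschitz if $d(f(x),f(x'))\le C\,d(x,x')+D$ for some constants $C,D>0$ and all $x,x'$. It is a quasi-isometric embedding if moreover $d(f(x),f(x'))\ge \frac1C d(x,x')-D$. $Y$ is a quasi-retract of $X$ if there exist coarse Lipschitz maps $\rho\colon X\to Y$ and $\iota\colon Y\to X$ and $E>0$ with $d(\rho(\iota(y)),y)\le E$ for all $y\in Y$. *)

theory Defs
  imports "HOL-Analysis.Analysis"
begin

text \<open>The Cantor set is modelled as infinite binary sequences nat => bool,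
  the space C^S as functions 'a => (nat => bool), where the type 'a plays the role of S
  (types are nonempty).\<close>

type_synonym cantor = "nat \<Rightarrow> bool"
type_synonym 'a cube = "'a \<Rightarrow> cantor"

definition cantor_top :: "cantor topology" where
  "cantor_top = product_topology (\<lambda>_. discrete_topology (UNIV::bool set)) UNIV"

definition cube_top :: "'a cube topology" where
  "cube_top = product_topology (\<lambda>_. cantor_top) UNIV"

definition is_prefix :: "bool list \<Rightarrow> cantor \<Rightarrow> bool" where
  "is_prefix w x \<longleftrightarrow> (\<forall>i<length w. x i = w ! i)"

definition fin_supp :: "('a \<Rightarrow> bool list) \<Rightarrow> bool" where
  "fin_supp \<psi> \<longleftrightarrow> finite {s. \<psi> s \<noteq> []}"

definition brick :: "('a \<Rightarrow> bool list) \<Rightarrow> 'a cube set" where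
  "brick \<psi> = {\<kappa>. \<forall>s. is_prefix (\<psi> s) (\<kappa> s)}"

definition concat_seq :: "bool list \<Rightarrow> cantor \<Rightarrow> cantor" where
  "concat_seq w x = (\<lambda>i. if i < length w then w ! i else x (i - length w))"

definition Phi :: "('a \<Rightarrow> bool list) \<Rightarrow> 'a cube \<Rightarrow> 'a cube" where
  "Phi \<psi> \<kappa> = (\<lambda>s. concat_seq (\<psi> s) (\<kappa> s))"

definition tau :: "('a \<Rightarrow> 'a) \<Rightarrow> 'a cube \<Rightarrow> 'a cube" where
  "tau \<gamma> \<kappa> = (\<lambda>s. \<kappa> (inv \<gamma> s))"

text \<open>Twist homeomorphism B(phi) -> B(psi) associated to gamma:
  Phi_psi o tau_gamma o Phi_phi^{-1} (considered on B(phi)).\<close>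
definition twist :: "('a \<Rightarrow> bool list) \<Rightarrow> ('a \<Rightarrow> bool list) \<Rightarrow> ('a \<Rightarrow> 'a) \<Rightarrow> 'a cube \<Rightarrow> 'a cube" where
  "twist \<phi> \<psi> \<gamma> = Phi \<psi> \<circ> tau \<gamma> \<circ> inv_into UNIV (Phi \<phi>)"

definition brick_partition :: "('a \<Rightarrow> bool list) list \<Rightarrow> bool" where
  "brick_partition ps \<longleftrightarrow>
     (\<forall>\<psi>\<in>set ps. fin_supp \<psi>) \<and>
     (\<forall>i<length ps. \<forall>j<length ps. i \<noteq> j \<longrightarrow> brick (ps ! i) \<inter> brick (ps ! j) = {}) \<and>
     (\<Union>\<psi>\<in>set ps. brick \<psi>) = UNIV"

definition perm_group :: "('a \<Rightarrow> 'a) set \<Rightarrow> bool" where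
  "perm_group G \<longleftrightarrow> (\<forall>g\<in>G. bij g) \<and> id \<in> G \<and>
     (\<forall>g\<in>G. \<forall>h\<in>G. g \<circ> h \<in> G) \<and> (\<forall>g\<in>G. inv g \<in> G)"

definition SV :: "('a \<Rightarrow> 'a) set \<Rightarrow> ('a cube \<Rightarrow> 'a cube) set" where
  "SV G = {h. homeomorphic_map cube_top cube_top h \<and>
     (\<exists>phis psis gs. length psis = length phis \<and> length gs = length phis \<and>
        brick_partition phis \<and> brick_partition psis \<and> set gs \<subseteq> G \<and>
        (\<forall>i<length phis. \<forall>\<kappa>\<in>brick (phis ! i). h \<kappa> = twist (phis ! i) (psis ! i) (gs ! i) \<kappa>))}"

definition word_prods :: "('b \<Rightarrow> 'b) set \<Rightarrow> ('b \<Rightarrow> 'b) set" where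
  "word_prods A = {foldr (\<circ>) xs id | xs. set xs \<subseteq> A \<union> inv ` A}"

definition generates :: "('b \<Rightarrow> 'b) set \<Rightarrow> ('b \<Rightarrow> 'b) set \<Rightarrow> bool" where
  "generates A X \<longleftrightarrow> A \<subseteq> X \<and> X = word_prods A"

definition word_length :: "('b \<Rightarrow> 'b) set \<Rightarrow> ('b \<Rightarrow> 'b) \<Rightarrow> nat" where
  "word_length A g = (LEAST n. \<exists>xs. length xs = n \<and> set xs \<subseteq> A \<union> inv ` A \<and> foldr (\<circ>) xs id = g)"

definition word_dist :: "('b \<Rightarrow> 'b) set \<Rightarrow> ('b \<Rightarrow> 'b) \<Rightarrow> ('b \<Rightarrow> 'b) \<Rightarrow> real" where
  "word_dist A g h = real (word_length A (inv g \<circ> h))"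

definition coarse_lipschitz ::
  "'x set \<Rightarrow> ('x \<Rightarrow> 'x \<Rightarrow> real) \<Rightarrow> ('y \<Rightarrow> 'y \<Rightarrow> real) \<Rightarrow> ('x \<Rightarrow> 'y) \<Rightarrow> bool" where
  "coarse_lipschitz X dX dY f \<longleftrightarrow> (\<exists>C D. C > 0 \<and> D > 0 \<and>
     (\<forall>x\<in>X. \<forall>x'\<in>X. dY (f x) (f x') \<le> C * dX x x' + D))"

definition qi_embedding ::
  "'x set \<Rightarrow> ('x \<Rightarrow> 'x \<Rightarrow> real) \<Rightarrow> ('y \<Rightarrow> 'y \<Rightarrow> real) \<Rightarrow> ('x \<Rightarrow> 'y) \<Rightarrow> bool" where
  "qi_embedding X dX dY f \<longleftrightarrow> (\<exists>C D. C > 0 \<and> D > 0 \<and>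
     (\<forall>x\<in>X. \<forall>x'\<in>X. dY (f x) (f x') \<le> C * dX x x' + D \<and>
                     dY (f x) (f x') \<ge> dX x x' / C - D))"

definition quasi_retract ::
  "'y set \<Rightarrow> ('y \<Rightarrow> 'y \<Rightarrow> real) \<Rightarrow> 'x set \<Rightarrow> ('x \<Rightarrow> 'x \<Rightarrow> real) \<Rightarrow> bool" where
  "quasi_retract Y dY X dX \<longleftrightarrow> (\<exists>\<rho> \<iota> E. \<rho> ` X \<subseteq> Y \<and> \<iota> ` Y \<subseteq> X \<and>
     coarse_lipschitz X dX dY \<rho> \<and> coarse_lipschitz Y dY dX \<iota> \<and> E > 0 \<and>
     (\<forall>y\<in>Y. dY (\<rho> (\<iota> y)) y \<le> E))"

end

theory Submission
  imports Defs
begin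

text \<open>Near every point, an element h of SV_G acts as a twist, and the element of G of that twist
  is determined by h (its germ there). Fix a base point p and let \<rho>(h) be the germ of h at
  h^-1(p). Then \<rho>(\<tau> \<gamma>) = \<gamma>, and since germs multiply under composition, \<rho>(h c) = \<rho>(h) \<beta> with
  \<beta> the germ of c at (h c)^-1(p), which is one of the finitely many elements of G used by c.
  So right multiplication by a generator of SV_G moves \<rho> by a bounded distance in G, i.e.
  \<rho> is Lipschitz; \<tau> is Lipschitz for the same reason, and \<rho> \<circ> \<tau> = id makes \<tau> a
  quasi-isometric embedding.\<close>

section \<open>Word metrics on groups of bijections\<close>

abbreviation letters :: "('b \<Rightarrow> 'b) set \<Rightarrow> ('b \<Rightarrow> 'b) set" where
  "letters A \<equiv> A \<union> inv ` A"

lemma foldr_comp_append: "foldr (\<circ>) (xs @ ys) id = foldr (\<circ>) xs id \<circ> foldr (\<circ>) ys id"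
  by (induction xs) auto

lemma bij_foldr_comp: "\<forall>x\<in>set xs. bij x \<Longrightarrow> bij (foldr (\<circ>) xs id)"
  by (induction xs) (auto intro: bij_comp)

lemma inv_foldr_comp:
  "\<forall>x\<in>set xs. bij x \<Longrightarrow> inv (foldr (\<circ>) xs id) = foldr (\<circ>) (rev (map inv xs)) id"
proof (induction xs)
  case Nil
  then show ?case by (simp add: inv_id)
next
  case (Cons x xs)
  then have "inv (foldr (\<circ>) (x # xs) id) = inv (foldr (\<circ>) xs id) \<circ> inv x"
    by (simp add: o_inv_distrib bij_foldr_comp)
  also have "\<dots> = foldr (\<circ>) (rev (map inv xs)) id \<circ> inv x"
    using Cons.IH Cons.prems by (metis list.set_intros(2))
  also have "\<dots> = foldr (\<circ>) (rev (map inv (x # xs))) id"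
    by (simp del: foldr_append add: foldr_comp_append)
  finally show ?case .
qed

lemma bij_letters: "\<forall>a\<in>A. bij a \<Longrightarrow> x \<in> letters A \<Longrightarrow> bij x"
  by (auto simp: bij_imp_bij_inv)

lemma inv_letters: "\<forall>a\<in>A. bij a \<Longrightarrow> x \<in> letters A \<Longrightarrow> inv x \<in> letters A"
  by (auto simp: inv_inv_eq)

lemma word_prods_foldr: "set xs \<subseteq> letters A \<Longrightarrow> foldr (\<circ>) xs id \<in> word_prods A"
  unfolding word_prods_def by blast

lemma word_prodsE:
  assumes "g \<in> word_prods A"
  obtains xs where "set xs \<subseteq> letters A" "foldr (\<circ>) xs id = g"
  using assms unfolding word_prods_def by blast

lemma letters_subset_word_prods: "letters A \<subseteq> word_prods A"
  using word_prods_foldr[of "[_]" A] by auto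

lemma word_prods_comp:
  assumes "g \<in> word_prods A" "h \<in> word_prods A"
  shows "g \<circ> h \<in> word_prods A"
proof -
  obtain xs ys where "set xs \<subseteq> letters A" "foldr (\<circ>) xs id = g"
    and "set ys \<subseteq> letters A" "foldr (\<circ>) ys id = h"
    using assms by (meson word_prodsE)
  then show ?thesis
    using word_prods_foldr[of "xs @ ys" A] by (simp del: foldr_append add: foldr_comp_append)
qed

lemma bij_word_prods:
  assumes "\<forall>a\<in>A. bij a" "g \<in> word_prods A"
  shows "bij g"
proof -
  obtain xs where xs: "set xs \<subseteq> letters A" "foldr (\<circ>) xs id = g"
    using assms(2) by (rule word_prodsE)
  then have "\<forall>x\<in>set xs. bij x" using bij_letters[OF assms(1)] by (meson subsetD)
  then show ?thesis unfolding xs(2)[symmetric] by (rule bij_foldr_comp)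
qed

lemma inv_word_prods:
  assumes "\<forall>a\<in>A. bij a" "g \<in> word_prods A"
  shows "inv g \<in> word_prods A"
proof -
  obtain xs where xs: "set xs \<subseteq> letters A" "foldr (\<circ>) xs id = g"
    using assms(2) by (rule word_prodsE)
  then have "\<forall>x\<in>set xs. bij x" using bij_letters[OF assms(1)] by (meson subsetD)
  then have "inv g = foldr (\<circ>) (rev (map inv xs)) id"
    unfolding xs(2)[symmetric] by (rule inv_foldr_comp)
  moreover have "set (rev (map inv xs)) \<subseteq> letters A"
    using xs(1) inv_letters[OF assms(1)] by auto
  ultimately show ?thesis using word_prods_foldr by metis
qed

lemma shortest_word:
  assumes "g \<in> word_prods A"
  obtains xs where "length xs = word_length A g" "set xs \<subseteq> letters A" "foldr (\<circ>) xs id = g"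
proof -
  have "\<exists>n xs. length xs = n \<and> set xs \<subseteq> letters A \<and> foldr (\<circ>) xs id = g"
    using assms unfolding word_prods_def by blast
  then have "\<exists>xs. length xs = word_length A g \<and> set xs \<subseteq> letters A \<and> foldr (\<circ>) xs id = g"
    unfolding word_length_def by (rule LeastI_ex)
  then show ?thesis using that by blast
qed

lemma word_length_le:
  "set xs \<subseteq> letters A \<Longrightarrow> foldr (\<circ>) xs id = g \<Longrightarrow> word_length A g \<le> length xs"
  unfolding word_length_def by (intro Least_le) blast

lemma word_length_comp:
  assumes "g \<in> word_prods A" "h \<in> word_prods A"
  shows "word_length A (g \<circ> h) \<le> word_length A g + word_length A h"
proof -
  obtain xs where "length xs = word_length A g" "set xs \<subseteq> letters A" "foldr (\<circ>) xs id = g"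
    using shortest_word[OF assms(1)] .
  moreover obtain ys where "length ys = word_length A h" "set ys \<subseteq> letters A" "foldr (\<circ>) ys id = h"
    using shortest_word[OF assms(2)] .
  ultimately show ?thesis
    using word_length_le[of "xs @ ys" A "g \<circ> h"] by (simp del: foldr_append add: foldr_comp_append)
qed

lemma word_length_id: "word_length A id = 0"
  using word_length_le[of "[]" A id] by simp

lemma word_dist_nonneg: "word_dist A g h \<ge> 0"
  by (simp add: word_dist_def)

lemma word_dist_self: "bij g \<Longrightarrow> word_dist A g g = 0"
  by (simp add: word_dist_def bij_is_inj inv_o_cancel word_length_id)

lemma word_chain_step_bound:
  assumes steps: "\<And>h c. h \<in> word_prods B \<Longrightarrow> c \<in> letters B \<Longrightarrow>
      \<exists>\<beta>\<in>word_prods A. f (h \<circ> c) = f h \<circ> \<beta> \<and> word_length A \<beta> \<le> K"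
  shows "set xs \<subseteq> letters B \<Longrightarrow> h \<in> word_prods B \<Longrightarrow>
      \<exists>w\<in>word_prods A. f (h \<circ> foldr (\<circ>) xs id) = f h \<circ> w \<and> word_length A w \<le> K * length xs"
proof (induction xs arbitrary: h)
  case Nil
  have "id \<in> word_prods A"
    using word_prods_foldr[of "[]" A] by simp
  then show ?case by (intro bexI[of _ id]) (simp_all add: word_length_id[unfolded id_def])
next
  case (Cons c xs)
  then have c: "c \<in> letters B" by simp
  then have hc: "h \<circ> c \<in> word_prods B"
    using Cons.prems(2) letters_subset_word_prods word_prods_comp by blast
  obtain \<beta> where \<beta>: "\<beta> \<in> word_prods A" "f (h \<circ> c) = f h \<circ> \<beta>" "word_length A \<beta> \<le> K"
    using steps[OF Cons.prems(2) c] by blast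
  obtain w where w: "w \<in> word_prods A" "f (h \<circ> c \<circ> foldr (\<circ>) xs id) = f (h \<circ> c) \<circ> w"
      "word_length A w \<le> K * length xs"
    using Cons.IH[OF _ hc] Cons.prems(1) by (meson list.set_intros(2) subset_code(1))
  have "h \<circ> foldr (\<circ>) (c # xs) id = h \<circ> c \<circ> foldr (\<circ>) xs id"
    by (simp add: o_assoc)
  then have eq: "f (h \<circ> foldr (\<circ>) (c # xs) id) = f h \<circ> (\<beta> \<circ> w)"
    by (simp only: w(2) \<beta>(2) o_assoc)
  have len: "word_length A (\<beta> \<circ> w) \<le> K * length (c # xs)"
    using word_length_comp[OF \<beta>(1) w(1)] \<beta>(3) w(3) by simp
  show ?case
  proof (rule bexI[of _ "\<beta> \<circ> w"])
    show "\<beta> \<circ> w \<in> word_prods A" using \<beta>(1) w(1) by (rule word_prods_comp)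
  qed (use eq len in \<open>rule conjI\<close>)
qed

lemma word_dist_lipschitz_if_steps_bounded:
  assumes "\<forall>b\<in>B. bij b" "\<forall>a\<in>A. bij a"
    and "f ` word_prods B \<subseteq> word_prods A"
    and "\<And>h c. h \<in> word_prods B \<Longrightarrow> c \<in> letters B \<Longrightarrow>
      \<exists>\<beta>\<in>word_prods A. f (h \<circ> c) = f h \<circ> \<beta> \<and> word_length A \<beta> \<le> K"
    and h: "h \<in> word_prods B" and h': "h' \<in> word_prods B"
  shows "word_dist A (f h) (f h') \<le> real K * word_dist B h h'"
proof -
  have "inv h \<circ> h' \<in> word_prods B"
    using assms(1) h h' by (intro word_prods_comp inv_word_prods)
  then obtain xs where xs: "length xs = word_length B (inv h \<circ> h')" "set xs \<subseteq> letters B"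
      "foldr (\<circ>) xs id = inv h \<circ> h'"
    by (rule shortest_word)
  obtain w where w: "f (h \<circ> foldr (\<circ>) xs id) = f h \<circ> w" "word_length A w \<le> K * length xs"
    using word_chain_step_bound[OF assms(4) xs(2) h] by blast
  have "h \<circ> inv h = id"
    using bij_word_prods[OF assms(1) h] by (meson bij_is_surj surj_iff)
  then have "h \<circ> (inv h \<circ> h') = h'" by (simp only: o_assoc id_comp)
  then have "f h' = f h \<circ> w" using w(1) xs(3) by simp
  moreover have "bij (f h)" using assms(2,3) h by (blast intro: bij_word_prods)
  ultimately have "inv (f h) \<circ> f h' = w" by (simp add: o_assoc bij_is_inj inv_o_cancel)
  then have "word_dist A (f h) (f h') = real (word_length A w)" by (simp add: word_dist_def)
  also have "\<dots> \<le> real (K * word_length B (inv h \<circ> h'))"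
    using w(2) xs(1) by (simp only: of_nat_le_iff)
  also have "\<dots> = real K * word_dist B h h'" by (simp add: word_dist_def)
  finally show ?thesis .
qed

lemma word_dist_lipschitz_if_finitely_many_steps:
  assumes "finite B" "\<forall>b\<in>B. bij b" "\<forall>a\<in>A. bij a"
    and "f ` word_prods B \<subseteq> word_prods A"
    and steps: "\<And>c. c \<in> letters B \<Longrightarrow> \<exists>F. finite F \<and> F \<subseteq> word_prods A \<and>
      (\<forall>h\<in>word_prods B. \<exists>\<beta>\<in>F. f (h \<circ> c) = f h \<circ> \<beta>)"
  shows "\<exists>K. \<forall>h\<in>word_prods B. \<forall>h'\<in>word_prods B.
    word_dist A (f h) (f h') \<le> real K * word_dist B h h'"
proof -
  from bchoice[OF ballI[OF steps]] obtain F where F: "\<forall>c\<in>letters B. finite (F c) \<and> F c \<subseteq> word_prods A \<and>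
      (\<forall>h\<in>word_prods B. \<exists>\<beta>\<in>F c. f (h \<circ> c) = f h \<circ> \<beta>)"
    ..
  define K where "K = Max (insert 0 (word_length A ` (\<Union>c\<in>letters B. F c)))"
  have "\<forall>c\<in>letters B. finite (F c)" using F by blast
  then have "finite (insert 0 (word_length A ` (\<Union>c\<in>letters B. F c)))"
    using assms(1) by simp
  then have bound: "word_length A \<beta> \<le> K" if "c \<in> letters B" "\<beta> \<in> F c" for c \<beta>
    unfolding K_def by (rule Max_ge) (use that in blast)
  have steps_K: "\<exists>\<beta>\<in>word_prods A. f (h \<circ> c) = f h \<circ> \<beta> \<and> word_length A \<beta> \<le> K"
    if h: "h \<in> word_prods B" and c: "c \<in> letters B" for h c
  proof -
    have Fc: "F c \<subseteq> word_prods A" "\<forall>h\<in>word_prods B. \<exists>\<beta>\<in>F c. f (h \<circ> c) = f h \<circ> \<beta>"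
      using bspec[OF F c] by simp_all
    then obtain \<beta> where "\<beta> \<in> F c" "f (h \<circ> c) = f h \<circ> \<beta>"
      using h by blast
    then show ?thesis using Fc(1) bound[OF c] by blast
  qed
  show ?thesis
  proof (intro exI[of _ K] ballI)
    fix h h' assume "h \<in> word_prods B" "h' \<in> word_prods B"
    with assms(2-4) steps_K show "word_dist A (f h) (f h') \<le> real K * word_dist B h h'"
      by (rule word_dist_lipschitz_if_steps_bounded)
  qed
qed

section \<open>Coarse geometry from Lipschitz bounds\<close>

lemma coarse_lipschitz_if_lipschitz:
  assumes "\<forall>x\<in>X. \<forall>x'\<in>X. dY (f x) (f x') \<le> K * dX x x'" "K \<ge> 0"
    and "\<forall>x\<in>X. \<forall>x'\<in>X. dX x x' \<ge> 0"
  shows "coarse_lipschitz X dX dY f"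
  unfolding coarse_lipschitz_def
proof (rule exI[of _ "K + 1"], rule exI[of _ "1::real"], intro conjI ballI)
  fix x x' assume "x \<in> X" "x' \<in> X"
  with assms have "dY (f x) (f x') \<le> K * dX x x'" "dX x x' \<ge> 0" by auto
  then show "dY (f x) (f x') \<le> (K + 1) * dX x x' + 1" by (simp add: distrib_right)
qed (use assms(2) in auto)

lemma qi_embedding_if_lipschitz_left_inverse:
  assumes f: "\<forall>x\<in>X. \<forall>x'\<in>X. dY (f x) (f x') \<le> K * dX x x'" "K \<ge> 0"
    and r: "\<forall>y\<in>Y. \<forall>y'\<in>Y. dX (r y) (r y') \<le> L * dY y y'" "L \<ge> 0"
    and fY: "f ` X \<subseteq> Y" and rf: "\<forall>x\<in>X. r (f x) = x"
    and dX: "\<forall>x\<in>X. \<forall>x'\<in>X. dX x x' \<ge> 0" and dY: "\<forall>y\<in>Y. \<forall>y'\<in>Y. dY y y' \<ge> 0"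
  shows "qi_embedding X dX dY f"
  unfolding qi_embedding_def
proof (rule exI[of _ "K + L + 1"], rule exI[of _ "1::real"], intro conjI ballI)
  fix x x' assume x: "x \<in> X" and x': "x' \<in> X"
  then have fx: "f x \<in> Y" "f x' \<in> Y" using fY by auto
  have "dY (f x) (f x') \<le> K * dX x x'" using f(1) x x' by simp
  also have "\<dots> \<le> (K + L + 1) * dX x x' + 1"
    using dX x x' \<open>L \<ge> 0\<close> by (simp add: distrib_right)
  finally show "dY (f x) (f x') \<le> (K + L + 1) * dX x x' + 1" .
  have "dX x x' = dX (r (f x)) (r (f x'))" using rf x x' by simp
  also have "\<dots> \<le> L * dY (f x) (f x')" using r(1) fx by simp
  also have "\<dots> \<le> (K + L + 1) * dY (f x) (f x')"
    using dY fx \<open>K \<ge> 0\<close> by (simp add: mult_right_mono)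
  finally have "dX x x' / (K + L + 1) \<le> dY (f x) (f x')"
    using \<open>K \<ge> 0\<close> \<open>L \<ge> 0\<close> by (simp add: pos_divide_le_eq mult.commute)
  then show "dY (f x) (f x') \<ge> dX x x' / (K + L + 1) - 1" by simp
qed (use f(2) r(2) in auto)

section \<open>Germs of twists\<close>

lemma Phi_inj: "inj (Phi \<phi>)"
proof (rule injI)
  fix a b assume e: "Phi \<phi> a = Phi \<phi> b"
  show "a = b"
  proof (rule ext, rule ext)
    fix s i
    have "Phi \<phi> a s (i + length (\<phi> s)) = Phi \<phi> b s (i + length (\<phi> s))" using e by simp
    then show "a s i = b s i" by (simp add: Phi_def concat_seq_def)
  qed
qed

lemma inv_Phi_on_brick:
  assumes "\<kappa> \<in> brick \<phi>"
  shows "inv_into UNIV (Phi \<phi>) \<kappa> = (\<lambda>s i. \<kappa> s (i + length (\<phi> s)))"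
proof -
  have pointwise: "Phi \<phi> (\<lambda>s i. \<kappa> s (i + length (\<phi> s))) s i = \<kappa> s i" for s i
  proof (cases "i < length (\<phi> s)")
    case True
    then show ?thesis using assms unfolding brick_def is_prefix_def by (simp add: Phi_def concat_seq_def)
  qed (simp add: Phi_def concat_seq_def)
  have "Phi \<phi> (\<lambda>s i. \<kappa> s (i + length (\<phi> s))) = \<kappa>"
    by (intro ext pointwise)
  then show ?thesis using inv_f_f[OF Phi_inj] by metis
qed

lemma twist_apply:
  assumes "\<kappa> \<in> brick \<phi>"
  shows "twist \<phi> \<psi> \<gamma> \<kappa> t = concat_seq (\<psi> t) (\<lambda>i. \<kappa> (inv \<gamma> t) (i + length (\<phi> (inv \<gamma> t))))"
  using assms by (simp add: twist_def inv_Phi_on_brick Phi_def tau_def)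

definition twist_germ :: "('a cube \<Rightarrow> 'a cube) \<Rightarrow> 'a cube \<Rightarrow> ('a \<Rightarrow> 'a) \<Rightarrow> bool" where
  "twist_germ h \<kappa> \<gamma> \<longleftrightarrow> (\<exists>\<phi> \<psi>. \<kappa> \<in> brick \<phi> \<and> (\<forall>\<kappa>'\<in>brick \<phi>. h \<kappa>' = twist \<phi> \<psi> \<gamma> \<kappa>'))"

text \<open>Twist germs are not obviously closed under composition; the weaker coordinate germs are,
  and by coordinate_germ_unique they still determine the twist germ.\<close>

definition coordinatewise_on :: "('a cube \<Rightarrow> 'a cube) \<Rightarrow> 'a cube set \<Rightarrow> ('a \<Rightarrow> 'a) \<Rightarrow> bool" where
  "coordinatewise_on h U \<gamma> \<longleftrightarrow>
     (\<forall>\<kappa>1\<in>U. \<forall>\<kappa>2\<in>U. \<forall>t. \<kappa>1 (inv \<gamma> t) = \<kappa>2 (inv \<gamma> t) \<longrightarrow> h \<kappa>1 t = h \<kappa>2 t)"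

definition coordinate_germ :: "('a cube \<Rightarrow> 'a cube) \<Rightarrow> 'a cube \<Rightarrow> ('a \<Rightarrow> 'a) \<Rightarrow> bool" where
  "coordinate_germ h \<kappa> \<gamma> \<longleftrightarrow> (\<exists>\<phi>. \<kappa> \<in> brick \<phi> \<and> coordinatewise_on h (brick \<phi>) \<gamma>)"

lemma coordinatewise_on_twist:
  assumes "\<forall>\<kappa>\<in>brick \<phi>. h \<kappa> = twist \<phi> \<psi> \<gamma> \<kappa>"
  shows "coordinatewise_on h (brick \<phi>) \<gamma>"
  using assms by (simp add: coordinatewise_on_def twist_apply)

lemma coordinate_germ_if_twist_germ: "twist_germ h \<kappa> \<gamma> \<Longrightarrow> coordinate_germ h \<kappa> \<gamma>"
  unfolding twist_germ_def coordinate_germ_def using coordinatewise_on_twist by blast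

text \<open>Flipping a deep bit of the input coordinate inv \<gamma>0 t leaves the input coordinate inv \<gamma> t
  unchanged but changes the output coordinate t of the twist.\<close>

lemma coordinate_germ_unique:
  assumes tg: "twist_germ h \<kappa> \<gamma>0" and cg: "coordinate_germ h \<kappa> \<gamma>" and "bij \<gamma>" "bij \<gamma>0"
  shows "\<gamma> = \<gamma>0"
proof (rule ccontr)
  assume "\<gamma> \<noteq> \<gamma>0"
  then obtain t where t: "inv \<gamma> t \<noteq> inv \<gamma>0 t" using assms(3,4) by (metis ext inv_inv_eq)
  obtain \<phi>0 \<psi>0 where k0: "\<kappa> \<in> brick \<phi>0" and tw: "\<forall>\<kappa>'\<in>brick \<phi>0. h \<kappa>' = twist \<phi>0 \<psi>0 \<gamma>0 \<kappa>'"
    using tg unfolding twist_germ_def by blast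
  obtain \<phi> where k1: "\<kappa> \<in> brick \<phi>" and cw: "coordinatewise_on h (brick \<phi>) \<gamma>"
    using cg unfolding coordinate_germ_def by blast
  define u where "u = inv \<gamma>0 t"
  define n where "n = length (\<phi>0 u) + length (\<phi> u)"
  define \<kappa>' where "\<kappa>' = \<kappa>(u := (\<kappa> u)(n := \<not> \<kappa> u n))"
  have in0: "\<kappa>' \<in> brick \<phi>0" and in1: "\<kappa>' \<in> brick \<phi>"
    using k0 k1 unfolding \<kappa>'_def brick_def is_prefix_def n_def by auto
  have "\<kappa> (inv \<gamma> t) = \<kappa>' (inv \<gamma> t)" using t unfolding \<kappa>'_def u_def by simp
  then have "h \<kappa> t = h \<kappa>' t" using cw k1 in1 unfolding coordinatewise_on_def by blast
  moreover define j where "j = length (\<psi>0 t) + length (\<phi> u)"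
  moreover have "h \<kappa> t j = \<kappa> u n"
    using tw k0 twist_apply[OF k0, of \<psi>0 \<gamma>0 t]
    unfolding j_def n_def u_def by (simp add: concat_seq_def add.commute)
  moreover have "h \<kappa>' t j = (\<not> \<kappa> u n)"
    using tw in0 twist_apply[OF in0, of \<psi>0 \<gamma>0 t]
    unfolding j_def n_def u_def \<kappa>'_def by (simp add: concat_seq_def add.commute)
  ultimately show False by simp
qed

lemma twist_germ_maps_brick_into:
  assumes tg: "twist_germ c x \<beta>" and "bij \<beta>" and cx: "c x \<in> brick \<phi>1"
  obtains \<phi> where "x \<in> brick \<phi>" "coordinatewise_on c (brick \<phi>) \<beta>" "c ` brick \<phi> \<subseteq> brick \<phi>1"
proof -
  obtain \<phi>2 \<psi> where x2: "x \<in> brick \<phi>2" and tw: "\<forall>\<kappa>\<in>brick \<phi>2. c \<kappa> = twist \<phi>2 \<psi> \<beta> \<kappa>"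
    using tg unfolding twist_germ_def by blast
  define \<phi> where "\<phi> u = map (x u) [0..<length (\<phi>2 u) + length (\<phi>1 (\<beta> u))]" for u
  have agree: "\<kappa> u i = x u i" if "\<kappa> \<in> brick \<phi>" "i < length (\<phi>2 u) + length (\<phi>1 (\<beta> u))" for \<kappa> u i
    using that unfolding brick_def is_prefix_def \<phi>_def by auto
  have sub: "brick \<phi> \<subseteq> brick \<phi>2"
    using x2 agree unfolding brick_def is_prefix_def by (auto simp: trans_less_add1)
  have "x \<in> brick \<phi>" unfolding \<phi>_def by (simp add: brick_def is_prefix_def)
  moreover have "coordinatewise_on c (brick \<phi>) \<beta>"
    using coordinatewise_on_twist[OF tw] sub unfolding coordinatewise_on_def by blast
  moreover have "c \<kappa> \<in> brick \<phi>1" if k: "\<kappa> \<in> brick \<phi>" for \<kappa>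
    unfolding brick_def is_prefix_def mem_Collect_eq
  proof (intro allI impI)
    fix t i assume i: "i < length (\<phi>1 t)"
    define u where "u = inv \<beta> t"
    have \<beta>u: "\<beta> u = t" unfolding u_def using \<open>bij \<beta>\<close> by (meson bij_inv_eq_iff)
    have "c \<kappa> t i = c x t i"
    proof (cases "i < length (\<psi> t)")
      case True
      then show ?thesis using tw k sub x2 by (simp add: twist_apply subsetD concat_seq_def)
    next
      case False
      then have "i - length (\<psi> t) + length (\<phi>2 u) < length (\<phi>2 u) + length (\<phi>1 (\<beta> u))"
        using i \<beta>u by simp
      then have "\<kappa> u (i - length (\<psi> t) + length (\<phi>2 u)) = x u (i - length (\<psi> t) + length (\<phi>2 u))"
        by (rule agree[OF k])
      then show ?thesis
        using False tw k sub x2 unfolding u_def by (simp add: twist_apply subsetD concat_seq_def)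
    qed
    then show "c \<kappa> t i = \<phi>1 t ! i" using cx i unfolding brick_def is_prefix_def by auto
  qed
  ultimately show ?thesis using that by blast
qed

lemma coordinate_germ_comp:
  assumes ch: "coordinate_germ h (c x) \<gamma>" and tc: "twist_germ c x \<beta>" and "bij \<beta>" "bij \<gamma>"
  shows "coordinate_germ (h \<circ> c) x (\<gamma> \<circ> \<beta>)"
proof -
  obtain \<phi>1 where p1: "c x \<in> brick \<phi>1" and cw1: "coordinatewise_on h (brick \<phi>1) \<gamma>"
    using ch unfolding coordinate_germ_def by blast
  obtain \<phi> where x: "x \<in> brick \<phi>" and cw: "coordinatewise_on c (brick \<phi>) \<beta>"
      and into: "c ` brick \<phi> \<subseteq> brick \<phi>1"
    using twist_germ_maps_brick_into[OF tc \<open>bij \<beta>\<close> p1] by blast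
  have "coordinatewise_on (h \<circ> c) (brick \<phi>) (\<gamma> \<circ> \<beta>)"
    unfolding coordinatewise_on_def
  proof (intro ballI allI impI)
    fix \<kappa>1 \<kappa>2 t assume k: "\<kappa>1 \<in> brick \<phi>" "\<kappa>2 \<in> brick \<phi>"
      and "\<kappa>1 (inv (\<gamma> \<circ> \<beta>) t) = \<kappa>2 (inv (\<gamma> \<circ> \<beta>) t)"
    then have "\<kappa>1 (inv \<beta> (inv \<gamma> t)) = \<kappa>2 (inv \<beta> (inv \<gamma> t))"
      using assms(3,4) by (simp add: o_inv_distrib)
    then have "c \<kappa>1 (inv \<gamma> t) = c \<kappa>2 (inv \<gamma> t)"
      using cw k unfolding coordinatewise_on_def by blast
    then show "(h \<circ> c) \<kappa>1 t = (h \<circ> c) \<kappa>2 t"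
      using cw1 into k unfolding coordinatewise_on_def by auto
  qed
  then show ?thesis unfolding coordinate_germ_def using x by blast
qed

section \<open>The retraction of SV_G onto G\<close>

lemma bij_SV: "h \<in> SV G \<Longrightarrow> bij h"
proof -
  assume "h \<in> SV G"
  then have hm: "homeomorphic_map cube_top cube_top h" unfolding SV_def by blast
  have "topspace cube_top = (UNIV :: 'a cube set)" by (simp add: cube_top_def cantor_top_def)
  then show "bij h"
    using homeomorphic_imp_injective_map[OF hm] homeomorphic_imp_surjective_map[OF hm]
    by (simp add: bij_def)
qed

lemma SV_finitely_many_twist_germs:
  assumes "h \<in> SV G"
  shows "\<exists>F. finite F \<and> F \<subseteq> G \<and> (\<forall>\<kappa>. \<exists>\<gamma>\<in>F. twist_germ h \<kappa> \<gamma>)"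
proof -
  obtain phis psis gs where len: "length gs = length phis" and bp: "brick_partition phis"
    and gs: "set gs \<subseteq> G"
    and tw: "\<forall>i<length phis. \<forall>\<kappa>\<in>brick (phis ! i). h \<kappa> = twist (phis ! i) (psis ! i) (gs ! i) \<kappa>"
    using assms unfolding SV_def by blast
  have "\<exists>\<gamma>\<in>set gs. twist_germ h \<kappa> \<gamma>" for \<kappa>
  proof -
    have "\<kappa> \<in> (\<Union>\<psi>\<in>set phis. brick \<psi>)" using bp by (simp add: brick_partition_def)
    then obtain i where i: "i < length phis" "\<kappa> \<in> brick (phis ! i)"
      by (auto simp: in_set_conv_nth)
    then have "twist_germ h \<kappa> (gs ! i)" using tw unfolding twist_germ_def by blast
    then show ?thesis using i(1) len by auto
  qed
  then show ?thesis using gs by blast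
qed

lemma tau_comp: "bij g \<Longrightarrow> bij h \<Longrightarrow> tau (g \<circ> h) = tau g \<circ> tau h"
  by (auto simp: tau_def o_inv_distrib fun_eq_iff)

lemma tau_id: "tau id = id"
  by (auto simp: tau_def fun_eq_iff inv_id)

lemma homeomorphic_map_tau:
  assumes "bij g"
  shows "homeomorphic_map cube_top cube_top (tau g)"
proof -
  have cont: "continuous_map cube_top cube_top (tau h)" for h :: "'a \<Rightarrow> 'a"
    unfolding cube_top_def continuous_map_componentwise_UNIV tau_def
    by (auto intro: continuous_map_product_projection)
  have "bij (inv g)" using assms by (rule bij_imp_bij_inv)
  moreover have "inv g \<circ> g = id" using assms by (simp add: bij_is_inj)
  moreover have "g \<circ> inv g = id" using assms by (meson bij_is_surj surj_iff)
  ultimately have "tau (inv g) \<circ> tau g = id" "tau g \<circ> tau (inv g) = id"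
    using assms tau_comp[of g "inv g"] tau_comp[of "inv g" g] by (simp_all add: tau_id)
  then have "homeomorphic_maps cube_top cube_top (tau g) (tau (inv g))"
    unfolding homeomorphic_maps_def using cont by (auto simp: fun_eq_iff o_def)
  then show ?thesis by (rule homeomorphic_maps_imp_map)
qed

lemma twist_empty_words: "twist (\<lambda>_. []) (\<lambda>_. []) \<gamma> = tau \<gamma>"
proof (intro ext)
  fix \<kappa> :: "'a cube" and t i
  have "\<kappa> \<in> brick (\<lambda>_. [])" by (simp add: brick_def is_prefix_def)
  then show "twist (\<lambda>_. []) (\<lambda>_. []) \<gamma> \<kappa> t i = tau \<gamma> \<kappa> t i"
    by (simp add: twist_apply concat_seq_def tau_def)
qed

lemma twist_germ_tau: "twist_germ (tau \<gamma>) \<kappa> \<gamma>"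
  unfolding twist_germ_def
  by (intro exI[of _ "\<lambda>_. []"]) (simp add: twist_empty_words brick_def is_prefix_def)

lemma tau_in_SV:
  assumes "perm_group G" "\<gamma> \<in> G"
  shows "tau \<gamma> \<in> SV G"
proof -
  have "brick_partition [\<lambda>_::'a. []]"
    by (simp add: brick_partition_def fin_supp_def brick_def is_prefix_def)
  then show ?thesis unfolding SV_def
    using homeomorphic_map_tau assms
    by (intro CollectI conjI exI[of _ "[\<lambda>_. []]"] exI[of _ "[\<gamma>]"])
      (auto simp: twist_empty_words perm_group_def)
qed

text \<open>The constant undefined serves as the base point p.\<close>

definition base_germ :: "('a \<Rightarrow> 'a) set \<Rightarrow> ('a cube \<Rightarrow> 'a cube) \<Rightarrow> ('a \<Rightarrow> 'a)" where
  "base_germ G h = (SOME \<gamma>. \<gamma> \<in> G \<and> twist_germ h (inv h undefined) \<gamma>)"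

lemma base_germ_spec:
  assumes "h \<in> SV G"
  shows "base_germ G h \<in> G" "twist_germ h (inv h undefined) (base_germ G h)"
proof -
  have "\<exists>\<gamma>. \<gamma> \<in> G \<and> twist_germ h (inv h undefined) \<gamma>"
    using SV_finitely_many_twist_germs[OF assms] by blast
  then have "base_germ G h \<in> G \<and> twist_germ h (inv h undefined) (base_germ G h)"
    unfolding base_germ_def by (rule someI_ex)
  then show "base_germ G h \<in> G" "twist_germ h (inv h undefined) (base_germ G h)" by auto
qed

lemma base_germ_tau:
  assumes "perm_group G" "\<gamma> \<in> G"
  shows "base_germ G (tau \<gamma>) = \<gamma>"
proof -
  have "tau \<gamma> \<in> SV G" using assms by (rule tau_in_SV)
  then show ?thesis
    using base_germ_spec coordinate_germ_if_twist_germ[OF twist_germ_tau] assms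
    by (metis coordinate_germ_unique perm_group_def)
qed

lemma base_germ_comp:
  assumes G: "perm_group G" and h: "h \<in> SV G" and c: "c \<in> SV G" and hc: "h \<circ> c \<in> SV G"
    and \<beta>: "\<beta> \<in> G" "twist_germ c (inv (h \<circ> c) undefined) \<beta>"
  shows "base_germ G (h \<circ> c) = base_germ G h \<circ> \<beta>"
proof -
  have bij: "bij h" "bij c" "bij \<beta>" "bij (base_germ G h)"
    using bij_SV h c \<beta>(1) base_germ_spec(1)[OF h] G by (auto simp: perm_group_def)
  have "c (inv (h \<circ> c) undefined) = inv h undefined"
    using bij by (simp add: o_inv_distrib bij_is_surj surj_f_inv_f)
  then have "coordinate_germ (h \<circ> c) (inv (h \<circ> c) undefined) (base_germ G h \<circ> \<beta>)"
    using coordinate_germ_comp coordinate_germ_if_twist_germ[OF base_germ_spec(2)[OF h]] \<beta>(2) bij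
    by metis
  moreover have "bij (base_germ G (h \<circ> c))" using base_germ_spec(1)[OF hc] G by (simp add: perm_group_def)
  ultimately show ?thesis
    using coordinate_germ_unique base_germ_spec(2)[OF hc] bij bij_comp by metis
qed

lemma base_germ_lipschitz:
  assumes G: "perm_group G" and A: "generates A G" and B: "finite B" "generates B (SV G)"
  shows "\<exists>K. \<forall>h\<in>SV G. \<forall>h'\<in>SV G.
    word_dist A (base_germ G h) (base_germ G h') \<le> real K * word_dist B h h'"
proof -
  have SV: "SV G = word_prods B" and "B \<subseteq> SV G" and Gw: "G = word_prods A" and "A \<subseteq> G"
    using A B(2) by (auto simp: generates_def)
  then have bijB: "\<forall>b\<in>B. bij b" and bijA: "\<forall>a\<in>A. bij a"
    using bij_SV G unfolding perm_group_def by blast+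
  have steps: "\<exists>F. finite F \<and> F \<subseteq> word_prods A \<and>
      (\<forall>h\<in>word_prods B. \<exists>\<beta>\<in>F. base_germ G (h \<circ> c) = base_germ G h \<circ> \<beta>)"
    if "c \<in> letters B" for c
  proof -
    have c: "c \<in> SV G" using that letters_subset_word_prods SV by blast
    obtain F where F: "finite F" "F \<subseteq> G" "\<forall>\<kappa>. \<exists>\<gamma>\<in>F. twist_germ c \<kappa> \<gamma>"
      using SV_finitely_many_twist_germs[OF c] by blast
    have "\<exists>\<beta>\<in>F. base_germ G (h \<circ> c) = base_germ G h \<circ> \<beta>" if h: "h \<in> SV G" for h
    proof -
      have hc: "h \<circ> c \<in> SV G" using word_prods_comp h c SV by simp
      obtain \<beta> where "\<beta> \<in> F" "twist_germ c (inv (h \<circ> c) undefined) \<beta>" using F(3) by blast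
      then show ?thesis using base_germ_comp[OF G h c hc] F(2) by blast
    qed
    then show ?thesis using F(1,2) unfolding SV[symmetric] Gw[symmetric] by blast
  qed
  have "base_germ G ` word_prods B \<subseteq> word_prods A" using base_germ_spec(1) SV Gw by auto
  from word_dist_lipschitz_if_finitely_many_steps[OF B(1) bijB bijA this steps]
  show ?thesis unfolding SV .
qed

lemma tau_lipschitz:
  assumes G: "perm_group G" and A: "finite A" "generates A G" and B: "generates B (SV G)"
  shows "\<exists>L. \<forall>g\<in>G. \<forall>g'\<in>G. word_dist B (tau g) (tau g') \<le> real L * word_dist A g g'"
proof -
  have SV: "SV G = word_prods B" and "B \<subseteq> SV G" and Gw: "G = word_prods A" and "A \<subseteq> G"
    using A(2) B by (auto simp: generates_def)
  then have bijB: "\<forall>b\<in>B. bij b" and bijA: "\<forall>a\<in>A. bij a"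
    using bij_SV G unfolding perm_group_def by blast+
  have bijG: "bij g" if "g \<in> word_prods A" for g using that G Gw by (simp add: perm_group_def)
  have steps: "\<exists>F. finite F \<and> F \<subseteq> word_prods B \<and>
      (\<forall>g\<in>word_prods A. \<exists>\<beta>\<in>F. tau (g \<circ> c) = tau g \<circ> \<beta>)"
    if "c \<in> letters A" for c
  proof -
    have c: "c \<in> word_prods A" using that letters_subset_word_prods by blast
    then have "tau c \<in> word_prods B" using tau_in_SV[OF G] Gw SV by simp
    moreover have "\<forall>g\<in>word_prods A. tau (g \<circ> c) = tau g \<circ> tau c"
      using tau_comp bijG c by blast
    ultimately show ?thesis by (intro exI[of _ "{tau c}"]) simp
  qed
  have "tau ` word_prods A \<subseteq> word_prods B" using tau_in_SV[OF G] Gw SV by auto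
  from word_dist_lipschitz_if_finitely_many_steps[OF A(1) bijA bijB this steps]
  show ?thesis unfolding Gw .
qed

theorem theoremB:
  fixes G :: "('a \<Rightarrow> 'a) set" and A :: "('a \<Rightarrow> 'a) set"
    and B :: "('a cube \<Rightarrow> 'a cube) set"
  assumes "perm_group G"
    and "finite A" and "generates A G"
    and "finite B" and "generates B (SV G)"
  shows "(\<exists>\<rho>. \<rho> ` SV G \<subseteq> G \<and> coarse_lipschitz (SV G) (word_dist B) (word_dist A) \<rho> \<and>
              (\<forall>\<gamma>\<in>G. \<rho> (tau \<gamma>) = \<gamma>))
         \<and> quasi_retract G (word_dist A) (SV G) (word_dist B)
         \<and> tau ` G \<subseteq> SV G \<and> qi_embedding G (word_dist A) (word_dist B) tau"
proof -
  note G = assms(1)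
  obtain K where \<rho>: "\<forall>h\<in>SV G. \<forall>h'\<in>SV G.
      word_dist A (base_germ G h) (base_germ G h') \<le> real K * word_dist B h h'"
    using base_germ_lipschitz[OF G assms(3,4,5)] by blast
  obtain L where \<tau>: "\<forall>g\<in>G. \<forall>g'\<in>G. word_dist B (tau g) (tau g') \<le> real L * word_dist A g g'"
    using tau_lipschitz[OF G assms(2,3,5)] by blast
  have retraction: "\<forall>\<gamma>\<in>G. base_germ G (tau \<gamma>) = \<gamma>" using base_germ_tau[OF G] by blast
  have into: "tau ` G \<subseteq> SV G" "base_germ G ` SV G \<subseteq> G" using tau_in_SV[OF G] base_germ_spec(1) by auto
  have cl_\<rho>: "coarse_lipschitz (SV G) (word_dist B) (word_dist A) (base_germ G)"
    by (rule coarse_lipschitz_if_lipschitz, fact \<rho>) (simp_all add: word_dist_nonneg)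
  have cl_\<tau>: "coarse_lipschitz G (word_dist A) (word_dist B) tau"
    by (rule coarse_lipschitz_if_lipschitz, fact \<tau>) (simp_all add: word_dist_nonneg)
  have "word_dist A (base_germ G (tau \<gamma>)) \<gamma> = 0" if "\<gamma> \<in> G" for \<gamma>
    using that retraction word_dist_self G unfolding perm_group_def by metis
  then have "quasi_retract G (word_dist A) (SV G) (word_dist B)"
    unfolding quasi_retract_def using into cl_\<rho> cl_\<tau>
    by (intro exI[of _ "base_germ G"] exI[of _ tau] exI[of _ "1::real"]) simp
  moreover have "qi_embedding G (word_dist A) (word_dist B) tau"
  proof (rule qi_embedding_if_lipschitz_left_inverse)
    show "\<forall>x\<in>G. \<forall>x'\<in>G. word_dist B (tau x) (tau x') \<le> real L * word_dist A x x'" by (fact \<tau>)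
    show "\<forall>y\<in>SV G. \<forall>y'\<in>SV G. word_dist A (base_germ G y) (base_germ G y') \<le> real K * word_dist B y y'"
      by (fact \<rho>)
  qed (use into retraction in \<open>simp_all add: word_dist_nonneg\<close>)
  ultimately show ?thesis using into cl_\<rho> retraction by blast
qed

end
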